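(* $12,13,14,15,16\notin\operatorname{Spec}(32_{65})$.
   Context: $32_{65}$ is the finite integral symmetric relation algebra with atoms $1'$, $a$, $b$, $c$, all symmetric, in which a diversity cycle $xyz$ (with $x,y,z\in\{a,b,c\}$) is mandatory (i.e. $x;y\ge z$) if it involves $a$ and forbidden (i.e. $x;y\cdot z=0$) otherwise. A representation over a set $U$ is an embedding into the full relation algebra on $U\times U$. $\operatorname{Spec}(A)$ is the set of cardinals $\alpha\le\omega$ such that $A$ has a representation over a set of cardinality $\alpha$. *)

theory Defs
  imports Main
begin

text \<open>The finite relation algebra 32_65, presented as the complex algebra of its
atom structure: elements are sets of atoms, join is union, complement is set
complement, converse is the identity (all atoms are symmetric), the identity
element is the atom set {Id'}, and composition is the complex (lifted) product of
the atom composition table.\<close>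

datatype atom = Id' | At_a | At_b | At_c

definition diversity :: "atom \<Rightarrow> bool" where
  "diversity x \<longleftrightarrow> x \<noteq> Id'"

text \<open>Identity is neutral; for diversity atoms,
the identity is below x;y iff x = y (converse of x is x); a diversity cycle xyz is
allowed (mandatory) iff it involves the atom a, forbidden otherwise.\<close>
definition atom_le_comp :: "atom \<Rightarrow> atom \<Rightarrow> atom \<Rightarrow> bool" where
  "atom_le_comp x y z \<longleftrightarrow>
     (if x = Id' then z = y
      else if y = Id' then z = x
      else if z = Id' then x = y
      else (x = At_a \<or> y = At_a \<or> z = At_a))"

type_synonym ra_elem = "atom set"

definition ra_comp :: "ra_elem \<Rightarrow> ra_elem \<Rightarrow> ra_elem" where
  "ra_comp X Y = {z. \<exists>x\<in>X. \<exists>y\<in>Y. atom_le_comp x y z}"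

definition ra_conv :: "ra_elem \<Rightarrow> ra_elem" where
  "ra_conv X = X"

definition ra_one :: ra_elem where
  "ra_one = {Id'}"

definition representation :: "'u set \<Rightarrow> (ra_elem \<Rightarrow> ('u \<times> 'u) set) \<Rightarrow> bool" where
  "representation U h \<longleftrightarrow>
     inj h \<and>
     (\<forall>X. h X \<subseteq> U \<times> U) \<and>
     (\<forall>X Y. h (X \<union> Y) = h X \<union> h Y) \<and>
     (\<forall>X. h (- X) = (U \<times> U) - h X) \<and>
     h ra_one = Id_on U \<and>
     (\<forall>X. h (ra_conv X) = converse (h X)) \<and>
     (\<forall>X Y. h (ra_comp X Y) = h X O h Y)"

definition fin_spec :: "nat set" where
  "fin_spec = {n. \<exists>(U::nat set) h. finite U \<and> card U = n \<and> representation U h}"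

end

theory Submission
  imports Defs
begin

text \<open>Let E be the image of b + c in a representation. No diversity cycle avoiding a is
allowed, so E;E \<le> 1' + a: E is a triangle-free graph, and every other pair of distinct
points is an a-edge. The mandatory cycles abb, acc, abc, acb give every a-edge four distinct
common E-neighbours of its endpoints. Chasing mandatory cycles from any point yields an
E-pentagon; its five diagonals are a-edges, and the common neighbourhoods of two diagonals
are disjoint because some endpoint of one is E-adjacent to some endpoint of the other.
Hence a nonempty finite representation has at least 5 * 4 = 20 points.\<close>

definition triangle_free :: "'a rel \<Rightarrow> bool" where
  "triangle_free E \<longleftrightarrow> (\<forall>x y z. (x, y) \<in> E \<longrightarrow> (y, z) \<in> E \<longrightarrow> (x, z) \<notin> E)"

definition common_neighbours :: "'a rel \<Rightarrow> 'a \<Rightarrow> 'a \<Rightarrow> 'a set" where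
  "common_neighbours E s t = {v. (s, v) \<in> E \<and> (t, v) \<in> E}"

lemma common_neighbours_disjoint_if_edge:
  assumes "triangle_free E" and "(s, t) \<in> E"
  shows "common_neighbours E s s' \<inter> common_neighbours E t t' = {}"
  using assms unfolding triangle_free_def common_neighbours_def by blast

lemma pentagon_diagonal:
  assumes "sym E" "triangle_free E"
    and "(v0, v1) \<in> E" "(v1, v2) \<in> E" "(v2, v3) \<in> E" "(v3, v4) \<in> E" "(v4, v0) \<in> E"
  shows "v0 \<noteq> v2 \<and> (v0, v2) \<notin> E"
  using assms unfolding triangle_free_def sym_def by metis

lemma card_ge_pentagon_common_neighbours:
  assumes "finite U" "E \<subseteq> U \<times> U" "sym E" "triangle_free E"
    and common: "\<And>s t. s \<in> U \<Longrightarrow> t \<in> U \<Longrightarrow> s \<noteq> t \<Longrightarrow> (s, t) \<notin> E \<Longrightarrow>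
                   k \<le> card (common_neighbours E s t)"
    and pentagon: "(v0, v1) \<in> E" "(v1, v2) \<in> E" "(v2, v3) \<in> E" "(v3, v4) \<in> E" "(v4, v0) \<in> E"
  shows "5 * k \<le> card U"
proof -
  let ?N = "common_neighbours E"
  let ?S = "?N v0 v2 \<union> ?N v1 v3 \<union> ?N v2 v4 \<union> ?N v3 v0 \<union> ?N v4 v1"
  have diagonal: "k \<le> card (?N a c)"
    if "(a, b) \<in> E" "(b, c) \<in> E" "(c, d) \<in> E" "(d, e) \<in> E" "(e, a) \<in> E" for a b c d e
    using common pentagon_diagonal[OF assms(3,4) that] that assms(2) by blast
  have sub: "?N s t \<subseteq> U" for s t
    using assms(2) unfolding common_neighbours_def by blast
  then have fin: "finite (?N s t)" for s t
    using assms(1) finite_subset by blast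
  have disj: "?N s s' \<inter> ?N t t' = {}" if "(s, t) \<in> E \<or> (t, s) \<in> E" for s s' t t'
    using that common_neighbours_disjoint_if_edge[OF assms(4)] by blast
  have comm: "?N s t = ?N t s" for s t
    unfolding common_neighbours_def by blast
  have "?N v0 v2 \<inter> ?N v1 v3 = {}" "?N v0 v2 \<inter> ?N v2 v4 = {}" "?N v0 v2 \<inter> ?N v3 v0 = {}"
    "?N v0 v2 \<inter> ?N v4 v1 = {}" "?N v1 v3 \<inter> ?N v2 v4 = {}" "?N v1 v3 \<inter> ?N v3 v0 = {}"
    "?N v1 v3 \<inter> ?N v4 v1 = {}" "?N v2 v4 \<inter> ?N v3 v0 = {}" "?N v2 v4 \<inter> ?N v4 v1 = {}"
    "?N v3 v0 \<inter> ?N v4 v1 = {}"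
    using pentagon disj comm by metis+
  then have "card ?S =
      card (?N v0 v2) + card (?N v1 v3) + card (?N v2 v4) + card (?N v3 v0) + card (?N v4 v1)"
    by (simp add: fin card_Un_disjoint Int_Un_distrib2)
  moreover have "card ?S \<le> card U"
    using sub assms(1) by (simp add: card_mono)
  moreover have "k \<le> card (?N v0 v2)" "k \<le> card (?N v1 v3)" "k \<le> card (?N v2 v4)"
    "k \<le> card (?N v3 v0)" "k \<le> card (?N v4 v1)"
    using diagonal pentagon by blast+
  ultimately show ?thesis by linarith
qed

lemma ra_comp_bc_bc: "ra_comp {At_b, At_c} {At_b, At_c} = {Id', At_a}"
  unfolding ra_comp_def atom_le_comp_def by (auto intro: atom.exhaust)

locale rep_32_65 =
  fixes U :: "'u set" and h :: "ra_elem \<Rightarrow> ('u \<times> 'u) set"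
  assumes representation: "representation U h"
begin

lemma h_subset: "h X \<subseteq> U \<times> U"
  and h_Un: "h (X \<union> Y) = h X \<union> h Y"
  and h_Compl: "h (- X) = U \<times> U - h X"
  and h_Id: "h {Id'} = Id_on U"
  and h_converse: "(h X)\<inverse> = h X"
  and h_comp: "h (ra_comp X Y) = h X O h Y"
  using representation unfolding representation_def ra_one_def ra_conv_def by auto

lemma h_mono: "X \<subseteq> Y \<Longrightarrow> h X \<subseteq> h Y"
  by (metis h_Un sup.absorb_iff2)

lemma h_Int: "h (X \<inter> Y) = h X \<inter> h Y"
proof -
  have "h (X \<inter> Y) = h (- (- X \<union> - Y))" by simp
  also have "\<dots> = U \<times> U - ((U \<times> U - h X) \<union> (U \<times> U - h Y))" by (simp only: h_Compl h_Un)
  also have "\<dots> = h X \<inter> h Y" using h_subset[of X] h_subset[of Y] by blast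
  finally show ?thesis .
qed

lemma h_empty: "h {} = {}"
  using h_Int[of "{Id'}" "- {Id'}"] h_Compl[of "{Id'}"] by simp

lemma h_UNIV: "h UNIV = U \<times> U"
  using h_Compl[of "{}"] h_empty by simp

lemma h_disjoint: "X \<inter> Y = {} \<Longrightarrow> h X \<inter> h Y = {}"
  by (metis h_Int h_empty)

lemma h_sym: "sym (h X)"
  by (metis h_converse sym_conv_converse_eq)

lemma h_swap: "(s, t) \<in> h X \<Longrightarrow> (t, s) \<in> h X"
  using h_sym by (rule symD)

lemma h_atom_witness:
  assumes "atom_le_comp x y z" and "(s, t) \<in> h {z}"
  obtains w where "(s, w) \<in> h {x}" "(w, t) \<in> h {y}"
proof -
  have "{z} \<subseteq> ra_comp {x} {y}" using assms(1) unfolding ra_comp_def by simp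
  then have "h {z} \<subseteq> h {x} O h {y}" by (metis h_mono h_comp)
  then show ?thesis using assms(2) that by blast
qed

definition E :: "('u \<times> 'u) set" where
  "E = h {At_b, At_c}"

lemma E_subset: "E \<subseteq> U \<times> U"
  unfolding E_def by (rule h_subset)

lemma E_sym: "sym E"
  unfolding E_def by (rule h_sym)

lemma E_eq: "E = h {At_b} \<union> h {At_c}"
  unfolding E_def by (metis h_Un insert_is_Un)

lemma E_triangle_free: "triangle_free E"
proof -
  have "E O E = h {Id', At_a}" unfolding E_def by (simp add: h_comp[symmetric] ra_comp_bc_bc)
  moreover have "h {Id', At_a} \<inter> E = {}" unfolding E_def by (rule h_disjoint) simp
  ultimately show ?thesis unfolding triangle_free_def by blast
qed

lemma in_h_a_if_not_in_E:
  assumes "s \<in> U" "t \<in> U" "s \<noteq> t" "(s, t) \<notin> E"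
  shows "(s, t) \<in> h {At_a}"
proof -
  have univ: "UNIV = {Id'} \<union> {At_a} \<union> {At_b, At_c}"
  proof (rule UNIV_eq_I)
    show "x \<in> {Id'} \<union> {At_a} \<union> {At_b, At_c}" for x by (cases x) simp_all
  qed
  have "U \<times> U = h UNIV" by (rule h_UNIV[symmetric])
  also have "\<dots> = h ({Id'} \<union> {At_a} \<union> {At_b, At_c})" using univ by (rule arg_cong)
  also have "\<dots> = Id_on U \<union> h {At_a} \<union> E" by (simp only: h_Un h_Id E_def)
  finally have "(s, t) \<in> Id_on U \<union> h {At_a} \<union> E" using assms(1,2) by blast
  then show ?thesis using assms(3,4) by auto
qed

lemma card_common_neighbours_ge_4:
  assumes "finite U" "(s, t) \<in> h {At_a}"
  shows "4 \<le> card (common_neighbours E s t)"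
proof -
  have a_below: "atom_le_comp At_b At_b At_a" "atom_le_comp At_c At_c At_a"
    "atom_le_comp At_b At_c At_a" "atom_le_comp At_c At_b At_a"
    by (simp_all add: atom_le_comp_def)
  obtain w1 where w1: "(s, w1) \<in> h {At_b}" "(w1, t) \<in> h {At_b}"
    by (rule h_atom_witness[OF a_below(1) assms(2)])
  obtain w2 where w2: "(s, w2) \<in> h {At_c}" "(w2, t) \<in> h {At_c}"
    by (rule h_atom_witness[OF a_below(2) assms(2)])
  obtain w3 where w3: "(s, w3) \<in> h {At_b}" "(w3, t) \<in> h {At_c}"
    by (rule h_atom_witness[OF a_below(3) assms(2)])
  obtain w4 where w4: "(s, w4) \<in> h {At_c}" "(w4, t) \<in> h {At_b}"
    by (rule h_atom_witness[OF a_below(4) assms(2)])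
  have "h {At_b} \<inter> h {At_c} = {}" by (rule h_disjoint) simp
  then have "w1 \<noteq> w2" "w1 \<noteq> w3" "w1 \<noteq> w4" "w2 \<noteq> w3" "w2 \<noteq> w4" "w3 \<noteq> w4"
    using w1 w2 w3 w4 by blast+
  then have "4 = card {w1, w2, w3, w4}" by simp
  also have "\<dots> \<le> card (common_neighbours E s t)"
  proof (rule card_mono)
    have "common_neighbours E s t \<subseteq> U"
      using E_subset unfolding common_neighbours_def by blast
    then show "finite (common_neighbours E s t)"
      using assms(1) by (rule finite_subset)
    show "{w1, w2, w3, w4} \<subseteq> common_neighbours E s t"
      using w1 w2 w3 w4 h_swap[OF w1(2)] h_swap[OF w2(2)] h_swap[OF w3(2)] h_swap[OF w4(2)]
      by (simp add: common_neighbours_def E_eq)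
  qed
  finally show ?thesis .
qed

lemma E_pentagon:
  assumes "u \<in> U"
  obtains x p q y where "(u, x) \<in> E" "(x, p) \<in> E" "(p, q) \<in> E" "(q, y) \<in> E" "(y, u) \<in> E"
proof -
  have cycles: "atom_le_comp At_b At_b Id'" "atom_le_comp At_a At_b At_b"
    "atom_le_comp At_a At_b At_a" "atom_le_comp At_b At_b At_a"
    by (simp_all add: atom_le_comp_def)
  have "(u, u) \<in> h {Id'}" using assms h_Id by auto
  then obtain x where ux: "(u, x) \<in> h {At_b}"
    by (rule h_atom_witness[OF cycles(1)])
  obtain p where up: "(u, p) \<in> h {At_a}" and px: "(p, x) \<in> h {At_b}"
    by (rule h_atom_witness[OF cycles(2) ux])
  obtain q where uq: "(u, q) \<in> h {At_a}" and qp: "(q, p) \<in> h {At_b}"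
    by (rule h_atom_witness[OF cycles(3) up])
  obtain y where uy: "(u, y) \<in> h {At_b}" and yq: "(y, q) \<in> h {At_b}"
    by (rule h_atom_witness[OF cycles(4) uq])
  have "(u, x) \<in> E" "(x, p) \<in> E" "(p, q) \<in> E" "(q, y) \<in> E" "(y, u) \<in> E"
    using ux h_swap[OF px] h_swap[OF qp] h_swap[OF yq] h_swap[OF uy] by (simp_all add: E_eq)
  then show thesis by (rule that)
qed

lemma card_ge_20:
  assumes "finite U" "U \<noteq> {}"
  shows "20 \<le> card U"
proof -
  obtain u where "u \<in> U" using assms(2) by blast
  then obtain x p q y where "(u, x) \<in> E" "(x, p) \<in> E" "(p, q) \<in> E" "(q, y) \<in> E" "(y, u) \<in> E"
    by (rule E_pentagon)
  moreover have "4 \<le> card (common_neighbours E s t)"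
    if "s \<in> U" "t \<in> U" "s \<noteq> t" "(s, t) \<notin> E" for s t
    using card_common_neighbours_ge_4[OF assms(1) in_h_a_if_not_in_E[OF that]] .
  ultimately have "5 * 4 \<le> card U"
    by (rule card_ge_pentagon_common_neighbours[OF assms(1) E_subset E_sym E_triangle_free, rotated])
  then show ?thesis by simp
qed

end

theorem mainTheorem7:
  shows "12 \<notin> fin_spec \<and> 13 \<notin> fin_spec \<and> 14 \<notin> fin_spec \<and> 15 \<notin> fin_spec \<and> 16 \<notin> fin_spec"
proof -
  have "n \<notin> fin_spec" if "0 < n" "n < 20" for n
  proof
    assume "n \<in> fin_spec"
    then obtain U :: "nat set" and h where fin: "finite U" and card: "card U = n"
      and rep: "representation U h"
      unfolding fin_spec_def by blast
    interpret rep_32_65 U h using rep by (rule rep_32_65.intro)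
    have "U \<noteq> {}" using card that(1) by auto
    then show False using card_ge_20[OF fin] card that(2) by simp
  qed
  then show ?thesis by simp
qed

end
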